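(* Let $M$ be a finite monoid and $k$ a field. Suppose there exist two irreducible elements $p,q\in M$ that are not associates. Define $f: M\to k[x,y]/\langle x^2,y^2,xy\rangle$ by $$f(m)=\begin{cases}1 & \text{if } m \text{ is a unit},\\ x & \text{if } m \text{ and } p \text{ are associates},\\ y & \text{if } m \text{ and } q \text{ are associates},\\ 0 & \text{otherwise}.\end{cases}$$ Then $f$ is a well-defined homomorphism of monoids (into the multiplicative monoid of the algebra), and it induces a surjective $k$-algebra homomorphism from the monoid algebra $kM$ onto $k[x,y]/\langle x^2,y^2,xy\rangle$.
   Context: A non-unit $p$ in a monoid $M$ is irreducible if whenever $p=ab$ with $a,b\in M$, then $a$ is a unit or $b$ is a unit. Two elements $a,b\in M$ are associates if there exist units $u,v\in M$ with $a=ubv$. $kM$ denotes the monoid algebra of $M$ over $k$. *)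

theory Defs
  imports Main
begin

definition munit :: "'m::monoid_mult \<Rightarrow> bool" where
  "munit u \<longleftrightarrow> (\<exists>v. u * v = 1 \<and> v * u = 1)"

definition mirreducible :: "'m::monoid_mult \<Rightarrow> bool" where
  "mirreducible p \<longleftrightarrow> \<not> munit p \<and> (\<forall>a b. p = a * b \<longrightarrow> munit a \<or> munit b)"

definition massoc :: "'m::monoid_mult \<Rightarrow> 'm \<Rightarrow> bool" where
  "massoc a b \<longleftrightarrow> (\<exists>u v. munit u \<and> munit v \<and> a = u * b * v)"

text \<open>A has k-basis 1, x, y; the triple (a,b,c) represents a + b x + c y.\<close>

type_synonym 'k Axy = "'k \<times> 'k \<times> 'k"

definition A_one :: "'k::field Axy" where "A_one = (1, 0, 0)"
definition A_x :: "'k::field Axy" where "A_x = (0, 1, 0)"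
definition A_y :: "'k::field Axy" where "A_y = (0, 0, 1)"
definition A_zero :: "'k::field Axy" where "A_zero = (0, 0, 0)"

definition A_add :: "'k::field Axy \<Rightarrow> 'k Axy \<Rightarrow> 'k Axy" where
  "A_add u w = (case u of (a, b, c) \<Rightarrow> case w of (a', b', c') \<Rightarrow> (a + a', b + b', c + c'))"

definition A_smult :: "'k::field \<Rightarrow> 'k Axy \<Rightarrow> 'k Axy" where
  "A_smult s u = (case u of (a, b, c) \<Rightarrow> (s * a, s * b, s * c))"

text \<open>(a + b x + c y)(a' + b' x + c' y) = aa' + (ab' + ba') x + (ac' + ca') y,
  since x^2 = y^2 = xy = 0.\<close>
definition A_mult :: "'k::field Axy \<Rightarrow> 'k Axy \<Rightarrow> 'k Axy" where
  "A_mult u w = (case u of (a, b, c) \<Rightarrow> case w of (a', b', c') \<Rightarrow>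
      (a * a', a * b' + b * a', a * c' + c * a'))"

text \<open>Since M is finite, kM is the space of all functions M \<Rightarrow> k with convolution.\<close>

definition MA_mult :: "('m::{monoid_mult,finite} \<Rightarrow> 'k::field) \<Rightarrow> ('m \<Rightarrow> 'k) \<Rightarrow> ('m \<Rightarrow> 'k)" where
  "MA_mult \<phi> \<psi> = (\<lambda>m. \<Sum>(a, b) \<in> {(a, b). a * b = m}. \<phi> a * \<psi> b)"

definition MA_one :: "'m::{monoid_mult,finite} \<Rightarrow> 'k::field" where
  "MA_one = (\<lambda>m. if m = 1 then 1 else 0)"

definition MA_basis :: "'m::{monoid_mult,finite} \<Rightarrow> 'm \<Rightarrow> 'k::field" where
  "MA_basis g = (\<lambda>m. if m = g then 1 else 0)"

definition fmap :: "'m::monoid_mult \<Rightarrow> 'm \<Rightarrow> 'm \<Rightarrow> 'k::field Axy" where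
  "fmap p q m = (if munit m then A_one else if massoc m p then A_x
                 else if massoc m q then A_y else A_zero)"

definition A_sum :: "('i \<Rightarrow> 'k::field Axy) \<Rightarrow> 'i set \<Rightarrow> 'k Axy" where
  "A_sum g I = ((\<Sum>i\<in>I. fst (g i)), (\<Sum>i\<in>I. fst (snd (g i))), (\<Sum>i\<in>I. snd (snd (g i))))"

definition Fmap :: "'m::{monoid_mult,finite} \<Rightarrow> 'm \<Rightarrow> ('m \<Rightarrow> 'k::field) \<Rightarrow> 'k Axy" where
  "Fmap p q \<phi> = A_sum (\<lambda>m. A_smult (\<phi> m) (fmap p q m)) UNIV"

end

theory Submission
  imports Defs
begin

(* Associates have the same image under f, so f only sees the classes of units, of p and of q,
   and of everything else.  In a finite monoid one-sided inverses are two-sided, so a product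
   of two non-units is a non-unit; it is moreover never an associate of an irreducible element.
   Hence f maps a product of two non-units to 0, and since x and y span an ideal of square zero
   this makes f multiplicative.  The linear extension of a multiplicative map is an algebra
   homomorphism, and it is onto because 1, p, q are sent to the basis 1, x, y. *)

lemma munit_one: "munit (1::'m::monoid_mult)"
  unfolding munit_def by auto

lemma munit_mult:
  assumes "munit (a::'m::monoid_mult)" and "munit b"
  shows "munit (a * b)"
proof -
  obtain a' b' where "a * a' = 1" "a' * a = 1" "b * b' = 1" "b' * b = 1"
    using assms unfolding munit_def by blast
  then have "a * b * (b' * a') = 1 \<and> b' * a' * (a * b) = 1"
    by (metis mult.assoc mult_1_left)
  then show ?thesis unfolding munit_def by blast
qed

lemma munit_inverseE:
  assumes "munit (a::'m::monoid_mult)"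
  obtains a' where "munit a'" "a * a' = 1" "a' * a = 1"
  using assms unfolding munit_def by blast

lemma finite_monoid_inverse_commute:
  fixes a b :: "'m::{monoid_mult,finite}"
  assumes "a * b = 1"
  shows "b * a = 1"
proof -
  have "surj (\<lambda>x. a * x)"
    by (metis assms mult.assoc mult_1_left surjI)
  then have "inj (\<lambda>x. a * x)"
    using finite_UNIV_surj_inj finite_UNIV by blast
  moreover have "a * (b * a) = a * 1"
    by (metis assms mult.assoc mult_1_left mult_1_right)
  ultimately show ?thesis by (meson injD)
qed

lemma finite_monoid_munit_mult_left:
  fixes a b :: "'m::{monoid_mult,finite}"
  assumes "munit (a * b)"
  shows "munit a"
proof -
  obtain w where "a * b * w = 1"
    using assms unfolding munit_def by blast
  then have "a * (b * w) = 1" by (simp add: mult.assoc)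
  moreover from this have "b * w * a = 1" by (rule finite_monoid_inverse_commute)
  ultimately show ?thesis unfolding munit_def by blast
qed

lemma massoc_refl: "massoc (a::'m::monoid_mult) a"
  unfolding massoc_def by (metis munit_one mult_1_left mult_1_right)

lemma massoc_sym:
  assumes "massoc (a::'m::monoid_mult) b"
  shows "massoc b a"
proof -
  obtain u v where uv: "munit u" "munit v" "a = u * b * v"
    using assms unfolding massoc_def by blast
  obtain u' where u': "munit u'" "u * u' = 1" "u' * u = 1" using uv(1) by (rule munit_inverseE)
  obtain v' where v': "munit v'" "v * v' = 1" "v' * v = 1" using uv(2) by (rule munit_inverseE)
  have "b = u' * a * v'"
    using uv u' v' by (metis mult.assoc mult_1_left mult_1_right)
  then show ?thesis unfolding massoc_def using u' v' by blast
qed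

lemma massoc_trans:
  assumes "massoc (a::'m::monoid_mult) b" and "massoc b c"
  shows "massoc a c"
proof -
  obtain u v where uv: "munit u" "munit v" "a = u * b * v"
    using assms(1) unfolding massoc_def by blast
  obtain u' v' where uv': "munit u'" "munit v'" "b = u' * c * v'"
    using assms(2) unfolding massoc_def by blast
  have "a = (u * u') * c * (v' * v)"
    using uv uv' by (simp add: mult.assoc)
  then show ?thesis unfolding massoc_def using uv uv' munit_mult by blast
qed

lemma massoc_mult_munit_left:
  assumes "munit (u::'m::monoid_mult)"
  shows "massoc (u * a) a"
  unfolding massoc_def using assms munit_one by (metis mult_1_right)

lemma massoc_mult_munit_right:
  assumes "munit (u::'m::monoid_mult)"
  shows "massoc (a * u) a"
  unfolding massoc_def using assms munit_one by (metis mult_1_left)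

lemma massoc_munit_iff:
  assumes "massoc (a::'m::monoid_mult) b"
  shows "munit a \<longleftrightarrow> munit b"
  using assms massoc_sym unfolding massoc_def by (metis munit_mult)

lemma mirreducible_not_massoc_mult:
  fixes a b p :: "'m::monoid_mult"
  assumes "mirreducible p" and "\<not> munit a" and "\<not> munit b"
  shows "\<not> massoc (a * b) p"
proof
  assume "massoc (a * b) p"
  then obtain u v where uv: "munit u" "munit v" "p = (u * a) * (b * v)"
    using massoc_sym unfolding massoc_def by (metis mult.assoc)
  then have "munit (u * a) \<or> munit (b * v)"
    using assms(1) unfolding mirreducible_def by blast
  then show False
    using assms(2,3) massoc_munit_iff massoc_mult_munit_left[OF uv(1)]
      massoc_mult_munit_right[OF uv(2)] by blast
qed

lemma A_mult_one_left: "A_mult A_one u = u"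
  by (simp add: A_mult_def A_one_def split: prod.splits)

lemma A_mult_one_right: "A_mult u A_one = u"
  by (simp add: A_mult_def A_one_def split: prod.splits)

lemma A_mult_eq_zero_if_fst_zero:
  assumes "fst u = 0" and "fst w = 0"
  shows "A_mult u w = A_zero"
  using assms by (cases u; cases w) (simp add: A_mult_def A_zero_def)

lemma A_mult_components:
  "fst (A_mult u w) = fst u * fst w"
  "fst (snd (A_mult u w)) = fst u * fst (snd w) + fst (snd u) * fst w"
  "snd (snd (A_mult u w)) = fst u * snd (snd w) + snd (snd u) * fst w"
  by (simp_all add: A_mult_def split: prod.splits)

lemma fmap_munit: "munit m \<Longrightarrow> fmap p q m = A_one"
  by (simp add: fmap_def)

lemma fst_fmap_nonunit: "\<not> munit m \<Longrightarrow> fst (fmap p q m) = 0"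
  by (simp add: fmap_def A_x_def A_y_def A_zero_def)

lemma fmap_massoc:
  assumes "massoc a b"
  shows "fmap p q a = fmap p q b"
proof -
  have "massoc a r \<longleftrightarrow> massoc b r" for r
    using assms massoc_sym massoc_trans by blast
  then show ?thesis
    using massoc_munit_iff[OF assms] by (simp add: fmap_def)
qed

lemma fmap_mult:
  fixes p q a b :: "'m::{monoid_mult,finite}"
  assumes "mirreducible p" and "mirreducible q"
  shows "fmap p q (a * b) = A_mult (fmap p q a) (fmap p q b)"
proof -
  consider "munit a" | "munit b" | "\<not> munit a" "\<not> munit b" by blast
  then show ?thesis
  proof cases
    case 1
    then show ?thesis
      by (simp add: fmap_massoc[OF massoc_mult_munit_left] fmap_munit A_mult_one_left)
  next
    case 2
    then show ?thesis
      by (simp add: fmap_massoc[OF massoc_mult_munit_right] fmap_munit A_mult_one_right)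
  next
    case 3
    then have "\<not> munit (a * b)" "\<not> massoc (a * b) p" "\<not> massoc (a * b) q"
      using finite_monoid_munit_mult_left mirreducible_not_massoc_mult assms by blast+
    then have "fmap p q (a * b) = A_zero" by (simp add: fmap_def)
    with 3 show ?thesis
      by (simp add: A_mult_eq_zero_if_fst_zero fst_fmap_nonunit)
  qed
qed

lemma Axy_eq_iff:
  "(u::'k Axy) = w \<longleftrightarrow> fst u = fst w \<and> fst (snd u) = fst (snd w) \<and> snd (snd u) = snd (snd w)"
  by (simp add: prod_eq_iff)

lemma Fmap_components:
  "fst (Fmap p q \<phi>) = (\<Sum>m\<in>UNIV. \<phi> m * fst (fmap p q m))"
  "fst (snd (Fmap p q \<phi>)) = (\<Sum>m\<in>UNIV. \<phi> m * fst (snd (fmap p q m)))"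
  "snd (snd (Fmap p q \<phi>)) = (\<Sum>m\<in>UNIV. \<phi> m * snd (snd (fmap p q m)))"
  unfolding Fmap_def A_sum_def A_smult_def by (simp_all add: case_prod_beta)

lemma Fmap_add: "Fmap p q (\<lambda>m. \<phi> m + \<psi> m) = A_add (Fmap p q \<phi>) (Fmap p q \<psi>)"
  by (simp add: Axy_eq_iff Fmap_components A_add_def case_prod_beta sum.distrib distrib_right)

lemma Fmap_smult: "Fmap p q (\<lambda>m. c * \<phi> m) = A_smult c (Fmap p q \<phi>)"
  by (simp add: Axy_eq_iff Fmap_components A_smult_def case_prod_beta sum_distrib_left mult.assoc)

lemma Fmap_MA_basis: "Fmap p q (MA_basis g) = fmap p q g"
  by (simp add: Axy_eq_iff Fmap_components MA_basis_def if_distrib[of "\<lambda>c. c * _"] cong: if_cong)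

lemma sum_MA_mult:
  fixes \<phi> \<psi> :: "'m::{monoid_mult,finite} \<Rightarrow> 'k::field"
  shows "(\<Sum>m\<in>UNIV. MA_mult \<phi> \<psi> m * h m) = (\<Sum>a\<in>UNIV. \<Sum>b\<in>UNIV. \<phi> a * \<psi> b * h (a * b))"
proof -
  have "(\<Sum>m\<in>UNIV. MA_mult \<phi> \<psi> m * h m)
      = (\<Sum>m\<in>UNIV. \<Sum>x\<in>{x \<in> UNIV. (\<lambda>(a, b). a * b) x = m}. (\<lambda>(a, b). \<phi> a * \<psi> b * h (a * b)) x)"
    unfolding MA_mult_def sum_distrib_right
    by (intro sum.cong refl) (auto simp: case_prod_beta)
  also have "\<dots> = (\<Sum>x\<in>UNIV. (\<lambda>(a, b). \<phi> a * \<psi> b * h (a * b)) x)"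
    by (rule sum.group) auto
  also have "\<dots> = (\<Sum>a\<in>UNIV. \<Sum>b\<in>UNIV. \<phi> a * \<psi> b * h (a * b))"
    by (subst sum.cartesian_product) (simp only: UNIV_Times_UNIV)
  finally show ?thesis .
qed

lemma Fmap_MA_mult:
  fixes \<phi> \<psi> :: "'m::{monoid_mult,finite} \<Rightarrow> 'k::field"
  assumes "\<And>a b. (fmap p q (a * b) :: 'k Axy) = A_mult (fmap p q a) (fmap p q b)"
  shows "Fmap p q (MA_mult \<phi> \<psi>) = A_mult (Fmap p q \<phi>) (Fmap p q \<psi>)"
proof -
  have product: "(\<Sum>a\<in>UNIV. \<Sum>b\<in>UNIV. \<phi> a * \<psi> b * (f a * g b))
      = (\<Sum>a\<in>UNIV. \<phi> a * f a) * (\<Sum>b\<in>UNIV. \<psi> b * g b)" for f g :: "'m \<Rightarrow> 'k"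
    by (simp add: sum_product mult_ac)
  show ?thesis
    by (simp only: Axy_eq_iff A_mult_components Fmap_components sum_MA_mult assms
        distrib_left sum.distrib product)
qed

lemma Fmap_surj:
  assumes "\<not> munit p" and "\<not> munit q" and "\<not> massoc q p"
  shows "surj (Fmap p q)"
proof (rule surjI)
  have images: "fmap p q 1 = A_one" "fmap p q p = A_x" "fmap p q q = A_y"
    using assms by (simp_all add: fmap_def munit_one massoc_refl)
  fix t :: "'k::field Axy"
  show "Fmap p q (\<lambda>m. fst t * MA_basis 1 m
      + (fst (snd t) * MA_basis p m + snd (snd t) * MA_basis q m)) = t"
    by (simp add: Fmap_add Fmap_smult Fmap_MA_basis images
        A_add_def A_smult_def A_one_def A_x_def A_y_def)
qed

theorem lemma1:
  fixes p q :: "'m::{monoid_mult,finite}"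
  assumes "mirreducible p" and "mirreducible q" and "\<not> massoc p q"
  shows "(\<forall>m. \<not> (munit m \<and> massoc m p) \<and> \<not> (munit m \<and> massoc m q)
                 \<and> \<not> (massoc m p \<and> massoc m q))
    \<and> (fmap p q 1 :: 'k::field Axy) = A_one
    \<and> (\<forall>a b. (fmap p q (a * b) :: 'k Axy) = A_mult (fmap p q a) (fmap p q b))
    \<and> (\<forall>\<phi> \<psi> :: 'm \<Rightarrow> 'k. Fmap p q (\<lambda>m. \<phi> m + \<psi> m) = A_add (Fmap p q \<phi>) (Fmap p q \<psi>))
    \<and> (\<forall>(c::'k) (\<phi> :: 'm \<Rightarrow> 'k). Fmap p q (\<lambda>m. c * \<phi> m) = A_smult c (Fmap p q \<phi>))
    \<and> (\<forall>\<phi> \<psi> :: 'm \<Rightarrow> 'k. Fmap p q (MA_mult \<phi> \<psi>) = A_mult (Fmap p q \<phi>) (Fmap p q \<psi>))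
    \<and> Fmap p q (MA_one :: 'm \<Rightarrow> 'k) = A_one
    \<and> (\<forall>g. Fmap p q (MA_basis g :: 'm \<Rightarrow> 'k) = fmap p q g)
    \<and> surj (Fmap p q :: ('m \<Rightarrow> 'k) \<Rightarrow> 'k Axy)"
proof -
  have nonunits: "\<not> munit p" "\<not> munit q"
    using assms(1,2) unfolding mirreducible_def by auto
  have classes_disjoint: "\<not> (munit m \<and> massoc m p) \<and> \<not> (munit m \<and> massoc m q)
      \<and> \<not> (massoc m p \<and> massoc m q)" for m
    using nonunits assms(3) massoc_munit_iff massoc_sym massoc_trans by metis
  have mult: "(fmap p q (a * b) :: 'k Axy) = A_mult (fmap p q a) (fmap p q b)" for a b
    using fmap_mult[OF assms(1,2)] .
  have "surj (Fmap p q :: ('m \<Rightarrow> 'k) \<Rightarrow> 'k Axy)"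
    using Fmap_surj nonunits assms(3) massoc_sym by blast
  moreover have "Fmap p q (MA_one :: 'm \<Rightarrow> 'k) = A_one"
    using Fmap_MA_basis[of p q 1] by (simp add: fmap_munit munit_one MA_one_def MA_basis_def)
  ultimately show ?thesis
    using classes_disjoint mult Fmap_MA_mult[OF mult]
    by (simp add: fmap_munit munit_one Fmap_add Fmap_smult Fmap_MA_basis)
qed

end
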